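(* Let $\beta\in\mathbb{C}$ with $|\beta|=1$, $m\in\mathrm{Hol}(\mathbb{D})$, $m\not\equiv0$, and $T:\mathrm{Hol}(\mathbb{D})\to\mathrm{Hol}(\mathbb{D})$ given by $(Tf)(z)=m(z)f(\beta z)$. Then (a) $0\notin\sigma_p(T)$; (b) if $\lambda\in\sigma_p(T)$, then $\beta^n\lambda\in\sigma_p(T)$ for all $n\in\mathbb{N}$.
   Context: $\mathbb{D}$ is the open unit disc, $\mathrm{Hol}(\mathbb{D})$ the space of holomorphic functions on $\mathbb{D}$. $\sigma_p(T)$ is the set of $\lambda\in\mathbb{C}$ such that $\lambda\mathrm{Id}-T$ is not injective. *)

theory Defs
  imports "HOL-Complex_Analysis.Complex_Analysis"
begin

text \<open>The open unit disc and Hol(D). Functions are total functions complex => complex;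
  two elements of Hol(D) are identified when they agree on the disc.\<close>

definition unit_disc :: "complex set" where
  "unit_disc = ball 0 1"

definition Hol_D :: "(complex \<Rightarrow> complex) set" where
  "Hol_D = {f. f holomorphic_on unit_disc}"

definition point_spectrum_Hol ::
  "((complex \<Rightarrow> complex) \<Rightarrow> (complex \<Rightarrow> complex)) \<Rightarrow> complex set" where
  "point_spectrum_Hol T =
     {c. \<exists>f\<in>Hol_D. (\<exists>z\<in>unit_disc. f z \<noteq> 0) \<and> (\<forall>z\<in>unit_disc. T f z = c * f z)}"

end

theory Submission
  imports Defs
begin

text \<open>By the identity theorem Hol(D) is an integral domain, so from m(z) f(\<beta> z) = 0
  with m \<noteq> 0 the rotated function, hence f, vanishes: 0 is not an eigenvalue. If T f = \<mu> f,
  then g(z) = z^n f(z) satisfies T g = \<beta>^n \<mu> g because (\<beta> z)^n = \<beta>^n z^n, and g \<noteq> 0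
  again because Hol(D) has no zero divisors.\<close>

lemma holomorphic_mult_eq_0_on_connected:
  assumes "f holomorphic_on S" "g holomorphic_on S" "open S" "connected S"
    and "\<And>z. z \<in> S \<Longrightarrow> f z * g z = 0"
    and "z0 \<in> S" "f z0 \<noteq> 0" "w \<in> S"
  shows "g w = 0"
proof -
  let ?U = "S \<inter> f -` (- {0})"
  have "continuous_on S f"
    using assms(1) holomorphic_on_imp_continuous_on by blast
  then have "open ?U"
    using assms(3) by (intro continuous_open_preimage) auto
  moreover have "z0 \<in> ?U"
    using assms(6,7) by simp
  moreover have "\<And>z. z \<in> ?U \<Longrightarrow> g z = 0"
    using assms(5) by force
  ultimately show ?thesis
    using analytic_continuation_open[of ?U S g "\<lambda>_. 0" w] assms(2-4,8) by auto
qed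

lemma open_unit_disc: "open unit_disc"
  by (simp add: unit_disc_def)

lemma connected_unit_disc: "connected unit_disc"
  by (simp add: unit_disc_def)

lemma mult_mem_unit_disc_iff:
  assumes "norm \<beta> = 1"
  shows "\<beta> * z \<in> unit_disc \<longleftrightarrow> z \<in> unit_disc"
  using assms by (simp add: unit_disc_def norm_mult)

lemma holomorphic_on_unit_disc_rotate:
  assumes "f holomorphic_on unit_disc" "norm \<beta> = 1"
  shows "(\<lambda>z. f (\<beta> * z)) holomorphic_on unit_disc"
proof -
  have "(*) \<beta> ` unit_disc \<subseteq> unit_disc"
    using mult_mem_unit_disc_iff[OF assms(2)] by auto
  then show ?thesis
    using holomorphic_on_compose_gen[of "(*) \<beta>" unit_disc f unit_disc] assms(1)
    by (auto simp: o_def intro: holomorphic_intros)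
qed

lemma zero_notin_point_spectrum_weighted_rotation:
  assumes "norm \<beta> = 1" "m \<in> Hol_D" "\<exists>z\<in>unit_disc. m z \<noteq> 0"
    and T: "\<And>f z. T f z = m z * f (\<beta> * z)"
  shows "0 \<notin> point_spectrum_Hol T"
proof
  assume "0 \<in> point_spectrum_Hol T"
  then obtain f w where f: "f holomorphic_on unit_disc" and w: "w \<in> unit_disc" "f w \<noteq> 0"
    and kernel: "\<And>z. z \<in> unit_disc \<Longrightarrow> m z * f (\<beta> * z) = 0"
    unfolding point_spectrum_Hol_def Hol_D_def using T by auto
  obtain z0 where "z0 \<in> unit_disc" "m z0 \<noteq> 0"
    using assms(3) by blast
  then have rotated_zero: "f (\<beta> * u) = 0" if "u \<in> unit_disc" for u
    using holomorphic_mult_eq_0_on_connected[OF _ holomorphic_on_unit_disc_rotate[OF f assms(1)]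
        open_unit_disc connected_unit_disc kernel] assms(2) that
    by (simp add: Hol_D_def)
  have "w / \<beta> \<in> unit_disc"
    using w(1) assms(1) by (simp add: unit_disc_def norm_divide)
  moreover have "\<beta> * (w / \<beta>) = w"
    using assms(1) by auto
  ultimately show False
    using rotated_zero w(2) by metis
qed

lemma point_spectrum_weighted_rotation_mult_power:
  assumes T: "\<And>f z. T f z = m z * f (\<beta> * z)"
    and "\<mu> \<in> point_spectrum_Hol T"
  shows "\<beta> ^ n * \<mu> \<in> point_spectrum_Hol T"
proof -
  obtain f w where f: "f holomorphic_on unit_disc" and w: "w \<in> unit_disc" "f w \<noteq> 0"
    and eigen: "\<And>z. z \<in> unit_disc \<Longrightarrow> m z * f (\<beta> * z) = \<mu> * f z"
    using assms(2) unfolding point_spectrum_Hol_def Hol_D_def using T by auto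
  define g where "g z = z ^ n * f z" for z
  have "g holomorphic_on unit_disc"
    unfolding g_def using f by (intro holomorphic_intros)
  moreover have "\<exists>z\<in>unit_disc. g z \<noteq> 0"
  proof (rule ccontr)
    assume "\<not> (\<exists>z\<in>unit_disc. g z \<noteq> 0)"
    moreover have "(1/2 :: complex) \<in> unit_disc"
      by (simp add: unit_disc_def)
    ultimately show False
      using holomorphic_mult_eq_0_on_connected[of "\<lambda>z. z ^ n" unit_disc f "1/2" w]
        f w open_unit_disc connected_unit_disc holomorphic_on_power[OF holomorphic_on_id]
      by (auto simp: g_def)
  qed
  moreover have "T g z = \<beta> ^ n * \<mu> * g z" if "z \<in> unit_disc" for z
  proof -
    have "T g z = \<beta> ^ n * z ^ n * (m z * f (\<beta> * z))"
      by (simp add: T g_def power_mult_distrib)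
    also have "\<dots> = \<beta> ^ n * \<mu> * g z"
      using eigen[OF that] by (simp add: g_def)
    finally show ?thesis .
  qed
  ultimately show ?thesis
    unfolding point_spectrum_Hol_def Hol_D_def by auto
qed

theorem proposition3p1:
  fixes \<beta> :: complex and m :: "complex \<Rightarrow> complex"
    and T :: "(complex \<Rightarrow> complex) \<Rightarrow> (complex \<Rightarrow> complex)"
  assumes "norm \<beta> = 1"
    and "m \<in> Hol_D"
    and "\<exists>z\<in>unit_disc. m z \<noteq> 0"
    and "\<And>f z. T f z = m z * f (\<beta> * z)"
  shows "0 \<notin> point_spectrum_Hol T \<and>
         (\<forall>\<mu>. \<mu> \<in> point_spectrum_Hol T \<longrightarrow> (\<forall>n::nat. \<beta> ^ n * \<mu> \<in> point_spectrum_Hol T))"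
  using zero_notin_point_spectrum_weighted_rotation[of \<beta> m T, OF assms]
    point_spectrum_weighted_rotation_mult_power[of T m \<beta>, OF assms(4)]
  by blast

end
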